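(* Let $R\subset S$ be a distributive FCP ring extension with Loewy series $\{S_i\}_{i=0}^n$. Then $R\subset S$ is a $\mathcal P$-extension if and only if the following condition holds: for every $T\in[R,S]$ with $T\neq R$, $T$ is $\Pi$-irreducible in $[R,S]$ if and only if there exists some $i\in\{0,\ldots,n-1\}$ such that $T$ is an atom of $[S_i,S_{i+1}]$.
   Context: All rings are commutative with identity. $[R,S]$ is the lattice of $R$-subalgebras of $S$ (meet = intersection, join = product $TU$). FCP: every chain in $[R,S]$ is finite. $T\subset U$ minimal means $[T,U]=\{T,U\}$; an atom of $[A,B]$ is $T$ with $A\subset T$ minimal and $T\subseteq B$; the socle $\mathcal S[A,B]$ is the product of all atoms of $[A,B]$. Loewy series: $S_0=R$, $S_{i+1}=\mathcal S[S_i,S]$ while $S_i\neq S$, $n$ least with $S_n=S$. The extension is a $\mathcal P$-extension if $[R,S]=\bigcup_{i=0}^{n-1}[S_i,S_{i+1}]$. Distributive: $[R,S]$ is a distributive lattice. An element $T\in[R,S]$ is $\Pi$-irreducible if $T=T_1T_2$ with $T_1,T_2\in[R,S]$ implies $T=T_1$ or $T=T_2$. *)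

theory Defs
  imports "HOL-Algebra.Algebra"
begin

text \<open>The ring extension R \<subset> S is modelled by a commutative ring S (HOL-Algebra record)
  and a subring R of S. Elements of [A,B] are the subrings T of S with A \<subseteq> T \<subseteq> B.\<close>

definition interval :: "('a, 'b) ring_scheme \<Rightarrow> 'a set \<Rightarrow> 'a set \<Rightarrow> 'a set set" where
  "interval S A B = {T. subring T S \<and> A \<subseteq> T \<and> T \<subseteq> B}"

definition ring_prod :: "('a, 'b) ring_scheme \<Rightarrow> 'a set \<Rightarrow> 'a set \<Rightarrow> 'a set" where
  "ring_prod S T U = generate_ring S (T \<union> U)"

definition FCP :: "('a, 'b) ring_scheme \<Rightarrow> 'a set \<Rightarrow> bool" where
  "FCP S R \<longleftrightarrow> (\<forall>Ch. Ch \<subseteq> interval S R (carrier S) \<and> (\<forall>T1\<in>Ch. \<forall>T2\<in>Ch. T1 \<subseteq> T2 \<or> T2 \<subseteq> T1)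
                       \<longrightarrow> finite Ch)"

definition distributive_ext :: "('a, 'b) ring_scheme \<Rightarrow> 'a set \<Rightarrow> bool" where
  "distributive_ext S R \<longleftrightarrow>
     (\<forall>T\<in>interval S R (carrier S). \<forall>U\<in>interval S R (carrier S). \<forall>V\<in>interval S R (carrier S).
        T \<inter> ring_prod S U V = ring_prod S (T \<inter> U) (T \<inter> V)
      \<and> ring_prod S T (U \<inter> V) = ring_prod S T U \<inter> ring_prod S T V)"

definition minimal_ext :: "('a, 'b) ring_scheme \<Rightarrow> 'a set \<Rightarrow> 'a set \<Rightarrow> bool" where
  "minimal_ext S T U \<longleftrightarrow> T \<subset> U \<and> interval S T U = {T, U}"

definition is_atom :: "('a, 'b) ring_scheme \<Rightarrow> 'a set \<Rightarrow> 'a set \<Rightarrow> 'a set \<Rightarrow> bool" where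
  "is_atom S A B T \<longleftrightarrow> subring T S \<and> minimal_ext S A T \<and> T \<subseteq> B"

definition socle :: "('a, 'b) ring_scheme \<Rightarrow> 'a set \<Rightarrow> 'a set \<Rightarrow> 'a set" where
  "socle S A B = generate_ring S (A \<union> \<Union>{T. is_atom S A B T})"

fun loewy :: "('a, 'b) ring_scheme \<Rightarrow> 'a set \<Rightarrow> nat \<Rightarrow> 'a set" where
  "loewy S R 0 = R"
| "loewy S R (Suc i) = (if loewy S R i = carrier S then carrier S
                         else socle S (loewy S R i) (carrier S))"

definition loewy_length :: "('a, 'b) ring_scheme \<Rightarrow> 'a set \<Rightarrow> nat" where
  "loewy_length S R = (LEAST n. loewy S R n = carrier S)"

definition P_extension :: "('a, 'b) ring_scheme \<Rightarrow> 'a set \<Rightarrow> bool" where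
  "P_extension S R \<longleftrightarrow>
     interval S R (carrier S) =
       (\<Union>i<loewy_length S R. interval S (loewy S R i) (loewy S R (Suc i)))"

definition Pi_irreducible :: "('a, 'b) ring_scheme \<Rightarrow> 'a set \<Rightarrow> 'a set \<Rightarrow> bool" where
  "Pi_irreducible S R T \<longleftrightarrow>
     (\<forall>T1\<in>interval S R (carrier S). \<forall>T2\<in>interval S R (carrier S).
        T = ring_prod S T1 T2 \<longrightarrow> T = T1 \<or> T = T2)"

end

theory Submission
  imports Defs
begin

text \<open>Call T comparable with the Loewy series if T \<subseteq> S_m or S_m \<subseteq> T for every m. In an FCP
  extension this holds exactly when T lies in some layer [S_i, S_{i+1}], so a \<P>-extension is
  one in which every intermediate ring is comparable with the Loewy series.

  If that is the case, an atom T of a layer [S_i, S_{i+1}] is \<Pi>-irreducible: every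
  intermediate ring properly contained in T lies below S_i, hence so does the product of two of
  them. Conversely a \<Pi>-irreducible T \<noteq> R satisfies S_i \<subset> T \<subseteq> S_{i+1} for some i, so T lies in
  the socle of [S_i, S]. FCP and distributivity make the atoms of [S_i, S] finite in number and
  give T = T \<inter> socle = product of the atoms contained in T, so irreducibility forces T to be
  one of these atoms.

  Finally, if every \<Pi>-irreducible T \<noteq> R is a layer atom, then every intermediate ring is
  comparable with the Loewy series, by well-founded induction on [R, S]: a reducible T is the
  product of two strictly smaller rings, and if S_m \<nsubseteq> T then both factors lie below S_m.\<close>

lemma wf_Int_if_chains_finite:
  fixes r :: "'a rel"
  assumes "trans r" and "irrefl r"
    and chains_finite:
      "\<And>C. C \<subseteq> A \<Longrightarrow> \<forall>x\<in>C. \<forall>y\<in>C. x = y \<or> (x, y) \<in> r \<or> (y, x) \<in> r \<Longrightarrow> finite C"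
  shows "wf (r \<inter> A \<times> A)"
proof (rule ccontr)
  assume "\<not> wf (r \<inter> A \<times> A)"
  then obtain f where f: "\<And>i. (f (Suc i), f i) \<in> r \<inter> A \<times> A"
    unfolding wf_iff_no_infinite_down_chain by blast
  have below: "(f j, f i) \<in> r" if "i < j" for i j
    using that by (induction rule: less_Suc_induct) (use f \<open>trans r\<close> in \<open>auto dest: transD\<close>)
  have "inj f"
  proof (rule injI)
    fix i j assume "f i = f j"
    then show "i = j"
      using below[of i j] below[of j i] \<open>irrefl r\<close> by (metis irrefl_def linorder_neqE_nat)
  qed
  moreover have "finite (range f)"
  proof (rule chains_finite)
    show "range f \<subseteq> A" using f by blast
    show "\<forall>x\<in>range f. \<forall>y\<in>range f. x = y \<or> (x, y) \<in> r \<or> (y, x) \<in> r"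
      using below by (metis imageE linorder_neqE_nat)
  qed
  ultimately show False using range_inj_infinite by blast
qed

lemma interval_iff: "T \<in> interval S A B \<longleftrightarrow> subring T S \<and> A \<subseteq> T \<and> T \<subseteq> B"
  unfolding interval_def by simp

lemma ring_prod_upper1: "T \<subseteq> ring_prod S T U"
  unfolding ring_prod_def using generate_ring.incl[of _ "T \<union> U" S] by blast

lemma ring_prod_upper2: "U \<subseteq> ring_prod S T U"
  unfolding ring_prod_def using generate_ring.incl[of _ "T \<union> U" S] by blast

definition ring_Prod :: "('a, 'b) ring_scheme \<Rightarrow> 'a set \<Rightarrow> 'a set set \<Rightarrow> 'a set" where
  "ring_Prod S W B = generate_ring S (W \<union> \<Union>B)"

lemma socle_eq_ring_Prod: "socle S A B = ring_Prod S A {T. is_atom S A B T}"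
  unfolding socle_def ring_Prod_def ..

lemma ring_Prod_lower: "W \<subseteq> ring_Prod S W B"
  unfolding ring_Prod_def using generate_ring.incl[of _ "W \<union> \<Union>B" S] by blast

lemma ring_Prod_upper: "b \<in> B \<Longrightarrow> b \<subseteq> ring_Prod S W B"
  unfolding ring_Prod_def using generate_ring.incl[of _ "W \<union> \<Union>B" S] by blast

context ring
begin

lemma generate_ring_subring: "subring H R \<Longrightarrow> generate_ring R H = H"
  using generate_ring_min_subring1[OF subringE(1), of H H] generate_ring.incl[of _ H R] by blast

lemma generate_ring_Un_generate_ring:
  assumes "A \<subseteq> carrier R" "B \<subseteq> carrier R"
  shows "generate_ring R (A \<union> generate_ring R B) = generate_ring R (A \<union> B)"
proof
  have AB: "A \<union> B \<subseteq> carrier R" and AgB: "A \<union> generate_ring R B \<subseteq> carrier R"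
    using assms generate_ring_incl[of B] by auto
  have "A \<union> generate_ring R B \<subseteq> generate_ring R (A \<union> B)"
    using mono_generate_ring[OF _ AB, of B] generate_ring.incl[of _ "A \<union> B" R] by blast
  then show "generate_ring R (A \<union> generate_ring R B) \<subseteq> generate_ring R (A \<union> B)"
    by (rule generate_ring_min_subring1[OF AgB generate_ring_is_subring[OF AB]])
  show "generate_ring R (A \<union> B) \<subseteq> generate_ring R (A \<union> generate_ring R B)"
    using generate_ring.incl[of _ B R] by (intro mono_generate_ring[OF _ AgB]) blast
qed

lemma ring_prod_least:
  assumes "subring V R" "T \<subseteq> V" "U \<subseteq> V"
  shows "ring_prod R T U \<subseteq> V"
  unfolding ring_prod_def
  using generate_ring_min_subring1[of "T \<union> U", OF _ assms(1)] subringE(1)[OF assms(1)] assms(2,3)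
  by blast

lemma ring_prod_absorb: "subring U R \<Longrightarrow> T \<subseteq> U \<Longrightarrow> ring_prod R T U = U"
  unfolding ring_prod_def by (simp add: Un_absorb1 generate_ring_subring)

lemma subring_ring_Prod: "W \<union> \<Union>B \<subseteq> carrier R \<Longrightarrow> subring (ring_Prod R W B) R"
  unfolding ring_Prod_def by (rule generate_ring_is_subring)

lemma ring_Prod_empty: "subring W R \<Longrightarrow> ring_Prod R W {} = W"
  unfolding ring_Prod_def by (simp add: generate_ring_subring)

lemma ring_Prod_insert:
  assumes "b \<subseteq> carrier R" "W \<union> \<Union>B \<subseteq> carrier R"
  shows "ring_Prod R W (insert b B) = ring_prod R b (ring_Prod R W B)"
proof -
  have "ring_prod R b (ring_Prod R W B) = generate_ring R (b \<union> (W \<union> \<Union>B))"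
    unfolding ring_prod_def ring_Prod_def using generate_ring_Un_generate_ring[OF assms] .
  also have "b \<union> (W \<union> \<Union>B) = W \<union> \<Union>(insert b B)" by auto
  finally show ?thesis unfolding ring_Prod_def by simp
qed

end

locale FCP_extension = ring S for S :: "('a, 'b) ring_scheme" (structure) +
  fixes R :: "'a set"
  assumes R_subring: "subring R S" and FCP: "FCP S R"
begin

abbreviation \<L> :: "'a set set" where "\<L> \<equiv> interval S R (carrier S)"

abbreviation atoms :: "'a set \<Rightarrow> 'a set set" where "atoms W \<equiv> {a. is_atom S W (carrier S) a}"

abbreviation \<S> :: "nat \<Rightarrow> 'a set" where "\<S> \<equiv> loewy S R"

lemma mem_L_iff: "T \<in> \<L> \<longleftrightarrow> subring T S \<and> R \<subseteq> T"
  by (auto simp: interval_iff dest: subringE(1))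

lemma mem_atoms_iff:
  "a \<in> atoms W \<longleftrightarrow>
     subring W S \<and> subring a S \<and> W \<subset> a \<and> (\<forall>U. subring U S \<and> W \<subseteq> U \<and> U \<subseteq> a \<longrightarrow> U = W \<or> U = a)"
    (is "_ \<longleftrightarrow> ?atom")
proof
  assume "a \<in> atoms W"
  then have a: "subring a S" "W \<subset> a" and interval: "interval S W a = {W, a}"
    unfolding is_atom_def minimal_ext_def by auto
  have "W \<in> interval S W a" using interval by simp
  then have "subring W S" by (simp add: interval_iff)
  moreover have "U = W \<or> U = a" if "subring U S" "W \<subseteq> U" "U \<subseteq> a" for U
  proof -
    have "U \<in> interval S W a" using that by (simp add: interval_iff)
    then show ?thesis unfolding interval by simp
  qed
  ultimately show ?atom using a by blast
next
  assume atom: ?atom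
  then have "interval S W a = {W, a}" by (auto simp: interval_iff)
  then show "a \<in> atoms W"
    using atom subringE(1)[of a S] unfolding is_atom_def minimal_ext_def by auto
qed

lemma carrier_in_L: "carrier S \<in> \<L>"
  unfolding mem_L_iff using carrier_is_subring subringE(1)[OF R_subring] by blast

lemma atom_in_L: "W \<in> \<L> \<Longrightarrow> a \<in> atoms W \<Longrightarrow> a \<in> \<L>"
  unfolding mem_L_iff mem_atoms_iff by blast

lemma atoms_Un_subset_carrier: "W \<in> \<L> \<Longrightarrow> B \<subseteq> atoms W \<Longrightarrow> W \<union> \<Union>B \<subseteq> carrier S"
  unfolding interval_iff is_atom_def by blast

lemma ring_Prod_atoms_insert:
  assumes "W \<in> \<L>" "B \<subseteq> atoms W" "b \<in> atoms W"
  shows "ring_Prod S W (insert b B) = ring_prod S b (ring_Prod S W B)"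
  using assms atoms_Un_subset_carrier[of W "{b}"] atoms_Un_subset_carrier[of W B]
  by (intro ring_Prod_insert) auto

lemma ring_Prod_atoms_in_L:
  assumes "W \<in> \<L>" "B \<subseteq> atoms W"
  shows "ring_Prod S W B \<in> \<L>"
proof -
  have "W \<union> \<Union>B \<subseteq> carrier S"
    using assms by (rule atoms_Un_subset_carrier)
  then have "subring (ring_Prod S W B) S" by (rule subring_ring_Prod)
  moreover have "R \<subseteq> ring_Prod S W B"
    using assms(1) ring_Prod_lower[of W S B] unfolding mem_L_iff by blast
  ultimately show ?thesis unfolding mem_L_iff ..
qed

lemma finite_chain_in_L:
  assumes "C \<subseteq> \<L>" "\<And>T U. T \<in> C \<Longrightarrow> U \<in> C \<Longrightarrow> T \<subseteq> U \<or> U \<subseteq> T"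
  shows "finite C"
  using FCP[unfolded FCP_def, rule_format, of C] assms by blast

lemma wf_Int_L:
  assumes "trans r" "irrefl r" and "r \<subseteq> {(U, T). U \<subset> T} \<union> {(T, U). U \<subset> T}"
  shows "wf (r \<inter> \<L> \<times> \<L>)"
proof (rule wf_Int_if_chains_finite[OF assms(1,2)])
  fix C assume "C \<subseteq> \<L>" and chain: "\<forall>T\<in>C. \<forall>U\<in>C. T = U \<or> (T, U) \<in> r \<or> (U, T) \<in> r"
  show "finite C"
    by (rule finite_chain_in_L[OF \<open>C \<subseteq> \<L>\<close>]) (use chain assms(3) in blast)
qed

lemma wf_psubset_L: "wf ({(U, T). U \<subset> T} \<inter> \<L> \<times> \<L>)"
  by (rule wf_Int_L) (auto simp: irrefl_def intro: transI)

lemma wf_psupset_L: "wf ({(T, U). U \<subset> T} \<inter> \<L> \<times> \<L>)"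
  by (rule wf_Int_L) (auto simp: irrefl_def intro: transI)

lemma no_strictly_increasing_seq_in_L:
  assumes "\<And>i. f i \<in> \<L>" "\<And>i. f i \<subset> f (Suc i)"
  shows False
  using wf_psupset_L assms unfolding wf_iff_no_infinite_down_chain by blast

lemma exists_atom:
  assumes W: "W \<in> \<L>" "W \<noteq> carrier S"
  shows "\<exists>a. a \<in> atoms W"
proof -
  have "carrier S \<in> {U \<in> \<L>. W \<subset> U}"
    using carrier_in_L W unfolding interval_iff by blast
  then obtain a where a: "a \<in> \<L>" "W \<subset> a"
    and a_min: "\<And>U. (U, a) \<in> {(U, T). U \<subset> T} \<inter> \<L> \<times> \<L> \<Longrightarrow> U \<notin> {U \<in> \<L>. W \<subset> U}"
    by (rule wfE_min[OF wf_psubset_L]) blast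
  have "U = W \<or> U = a" if U: "subring U S" "W \<subseteq> U" "U \<subseteq> a" for U
  proof (rule ccontr)
    assume "\<not> ?thesis"
    then have "U \<in> \<L>" "W \<subset> U" "U \<subset> a"
      using U W(1) unfolding mem_L_iff by blast+
    then show False using a_min[of U] a(1) by blast
  qed
  then have "a \<in> atoms W"
    using W(1) a unfolding mem_atoms_iff mem_L_iff by blast
  then show ?thesis ..
qed

lemma atom_subset_atom: "a \<in> atoms W \<Longrightarrow> b \<in> atoms W \<Longrightarrow> b \<subseteq> a \<Longrightarrow> b = a"
  unfolding mem_atoms_iff by blast

lemma atom_Int:
  assumes "T \<in> \<L>" "W \<subseteq> T" "a \<in> atoms W"
  shows "a \<subseteq> T \<or> T \<inter> a = W"
  using assms subring_inter[of T a] unfolding mem_L_iff mem_atoms_iff by blast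

lemma atom_subset_socle: "a \<in> atoms W \<Longrightarrow> a \<subseteq> socle S W (carrier S)"
  unfolding socle_eq_ring_Prod by (rule ring_Prod_upper) simp

lemma loewy_in_L: "\<S> i \<in> \<L>"
proof (induction i)
  case 0
  show ?case using R_subring by (simp add: mem_L_iff)
next
  case (Suc i)
  have "socle S (\<S> i) (carrier S) \<in> \<L>"
    unfolding socle_eq_ring_Prod using Suc by (rule ring_Prod_atoms_in_L) simp
  then show ?case using carrier_in_L by simp
qed

lemma subring_loewy: "subring (\<S> i) S"
  using loewy_in_L[of i] by (simp add: mem_L_iff)

lemma loewy_subset_Suc: "\<S> i \<subseteq> \<S> (Suc i)"
  using ring_Prod_lower[of "\<S> i" S "atoms (\<S> i)"] by (simp add: socle_eq_ring_Prod)

lemma loewy_mono: "i \<le> j \<Longrightarrow> \<S> i \<subseteq> \<S> j"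
  by (rule lift_Suc_mono_le[of \<S>, OF loewy_subset_Suc])

lemma loewy_psubset_Suc:
  assumes "\<S> i \<noteq> carrier S"
  shows "\<S> i \<subset> \<S> (Suc i)"
proof -
  obtain a where a: "a \<in> atoms (\<S> i)"
    using exists_atom[OF loewy_in_L assms] ..
  then have "\<S> i \<subset> a" unfolding mem_atoms_iff by blast
  moreover have "a \<subseteq> \<S> (Suc i)" using atom_subset_socle[OF a] assms by simp
  ultimately show ?thesis by blast
qed

lemma loewy_length_eq_carrier: "\<S> (loewy_length S R) = carrier S"
proof -
  have "\<exists>n. \<S> n = carrier S"
    using no_strictly_increasing_seq_in_L[of \<S>, OF loewy_in_L] loewy_psubset_Suc by blast
  then show ?thesis unfolding loewy_length_def by (rule LeastI_ex)
qed

lemma loewy_neq_carrier: "i < loewy_length S R \<Longrightarrow> \<S> i \<noteq> carrier S"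
  unfolding loewy_length_def by (rule not_less_Least)

lemma loewy_eq_carrier: "loewy_length S R \<le> i \<Longrightarrow> \<S> i = carrier S"
  using loewy_mono[of "loewy_length S R" i] loewy_length_eq_carrier loewy_in_L[of i]
  by (auto simp: interval_iff)

lemma loewy_Suc_eq_socle: "i < loewy_length S R \<Longrightarrow> \<S> (Suc i) = socle S (\<S> i) (carrier S)"
  using loewy_neq_carrier by simp

lemma is_atom_layer_iff:
  assumes "i < loewy_length S R"
  shows "is_atom S (\<S> i) (\<S> (Suc i)) T \<longleftrightarrow> T \<in> atoms (\<S> i)"
  using atom_subset_socle[of T "\<S> i"] loewy_Suc_eq_socle[OF assms] subringE(1)[of T S]
    subringE(1)[OF subring_loewy[of "Suc i"]]
  unfolding is_atom_def by blast

abbreviation loewy_comparable :: "'a set \<Rightarrow> bool" where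
  "loewy_comparable T \<equiv> \<forall>m. T \<subseteq> \<S> m \<or> \<S> m \<subseteq> T"

lemma loewy_comparable_if_in_layer:
  assumes "\<S> j \<subseteq> T" "T \<subseteq> \<S> (Suc j)"
  shows "loewy_comparable T"
proof
  fix m
  show "T \<subseteq> \<S> m \<or> \<S> m \<subseteq> T"
  proof (cases "m \<le> j")
    case True
    then show ?thesis using loewy_mono[OF True] assms by blast
  next
    case False
    then have "Suc j \<le> m" by simp
    then show ?thesis using loewy_mono assms by blast
  qed
qed

lemma layer_if_loewy_comparable:
  assumes T: "T \<in> \<L>" "R \<subset> T" and comparable: "loewy_comparable T"
  shows "\<exists>i<loewy_length S R. \<S> i \<subset> T \<and> T \<subseteq> \<S> (Suc i)"
proof -
  have "\<not> \<S> (loewy_length S R) \<subset> T"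
    using loewy_length_eq_carrier T(1) unfolding interval_iff by blast
  then have "\<exists>n. \<not> \<S> n \<subset> T" ..
  moreover have "\<S> 0 \<subset> T" using T(2) by simp
  ultimately obtain i where below: "\<S> i \<subset> T" and not_below: "\<not> \<S> (Suc i) \<subset> T"
    using exists_least_lemma[of "\<lambda>i. \<not> \<S> i \<subset> T"] by blast
  have "i < loewy_length S R"
  proof (rule ccontr)
    assume "\<not> ?thesis"
    then have "\<S> i = carrier S" by (simp add: loewy_eq_carrier)
    then show False using below T(1) by (auto simp: interval_iff)
  qed
  moreover have "T \<subseteq> \<S> (Suc i)" using comparable not_below by blast
  ultimately show ?thesis using below by blast
qed

lemma loewy_comparable_if_P_extension:
  assumes "P_extension S R" "T \<in> \<L>"
  shows "loewy_comparable T"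
proof -
  obtain j where "T \<in> interval S (\<S> j) (\<S> (Suc j))"
    using assms unfolding P_extension_def by blast
  then have "\<S> j \<subseteq> T" "T \<subseteq> \<S> (Suc j)"
    unfolding interval_iff by blast+
  then show ?thesis by (rule loewy_comparable_if_in_layer)
qed

lemma P_extension_if_loewy_comparable:
  assumes "R \<noteq> carrier S" and comparable: "\<And>T. T \<in> \<L> \<Longrightarrow> loewy_comparable T"
  shows "P_extension S R"
  unfolding P_extension_def
proof (intro equalityI subsetI)
  fix T assume T: "T \<in> \<L>"
  show "T \<in> (\<Union>i<loewy_length S R. interval S (\<S> i) (\<S> (Suc i)))"
  proof (cases "T = R")
    case True
    have "0 < loewy_length S R"
      using assms(1) loewy_length_eq_carrier by (metis gr0I loewy.simps(1))
    moreover have "T \<in> interval S (\<S> 0) (\<S> (Suc 0))"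
      using T True loewy_subset_Suc[of 0] by (simp add: interval_iff)
    ultimately show ?thesis by blast
  next
    case False
    then have "R \<subset> T" using T unfolding mem_L_iff by blast
    then obtain i where i: "i < loewy_length S R" "\<S> i \<subset> T" "T \<subseteq> \<S> (Suc i)"
      using layer_if_loewy_comparable[OF T _ comparable[OF T]] by blast
    then have "T \<in> interval S (\<S> i) (\<S> (Suc i))"
      using T unfolding interval_iff by blast
    then show ?thesis using i(1) by blast
  qed
next
  fix T assume "T \<in> (\<Union>i<loewy_length S R. interval S (\<S> i) (\<S> (Suc i)))"
  then obtain i where "T \<in> interval S (\<S> i) (\<S> (Suc i))" by blast
  then show "T \<in> \<L>"
    using loewy_in_L[of i] loewy_in_L[of "Suc i"] by (auto simp: interval_iff)
qed

lemma layer_atom_Pi_irreducible: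
  assumes comparable: "\<And>U. U \<in> \<L> \<Longrightarrow> loewy_comparable U"
    and atom: "is_atom S (\<S> i) (\<S> (Suc i)) T"
  shows "Pi_irreducible S R T"
  unfolding Pi_irreducible_def
proof (intro ballI impI)
  have T: "\<S> i \<subset> T" and T_interval: "interval S (\<S> i) T = {\<S> i, T}"
    using atom unfolding is_atom_def minimal_ext_def by blast+
  have below: "U \<subseteq> \<S> i" if U: "U \<in> \<L>" "U \<subseteq> T" "U \<noteq> T" for U
  proof -
    consider "U \<subseteq> \<S> i" | "\<S> i \<subseteq> U" using comparable[OF U(1)] by blast
    then show ?thesis
    proof cases
      case 2
      then have "U \<in> interval S (\<S> i) T" using U(1,2) unfolding interval_iff mem_L_iff by blast
      then have "U = \<S> i" using U(3) unfolding T_interval by blast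
      then show ?thesis by simp
    qed
  qed
  fix T1 T2 assume T12: "T1 \<in> \<L>" "T2 \<in> \<L>" and T_eq: "T = ring_prod S T1 T2"
  show "T = T1 \<or> T = T2"
  proof (rule ccontr)
    assume "\<not> ?thesis"
    then have "T1 \<subseteq> \<S> i" "T2 \<subseteq> \<S> i"
      using below T12 T_eq ring_prod_upper1[of T1 S T2] ring_prod_upper2[of T2 S T1] by blast+
    then have "T \<subseteq> \<S> i" unfolding T_eq by (rule ring_prod_least[OF subring_loewy])
    then show False using T by blast
  qed
qed

lemma in_layer_or_reducible:
  assumes layer_atoms:
    "\<And>T. T \<in> \<L> \<Longrightarrow> T \<noteq> R \<Longrightarrow> Pi_irreducible S R T \<Longrightarrow> \<exists>i. is_atom S (\<S> i) (\<S> (Suc i)) T"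
    and T: "T \<in> \<L>"
  obtains (layer) j where "\<S> j \<subseteq> T" "T \<subseteq> \<S> (Suc j)"
    | (reducible) T1 T2 where "T1 \<in> \<L>" "T2 \<in> \<L>" "T = ring_prod S T1 T2" "T1 \<subset> T" "T2 \<subset> T"
proof (cases "T = R")
  case True
  have "\<S> 0 \<subseteq> T" using True by simp
  moreover have "T \<subseteq> \<S> (Suc 0)" using True loewy_subset_Suc[of 0] by (metis loewy.simps(1))
  ultimately show ?thesis by (rule layer)
next
  case T_ne_R: False
  show ?thesis
  proof (cases "Pi_irreducible S R T")
    case True
    then obtain j where "is_atom S (\<S> j) (\<S> (Suc j)) T"
      using layer_atoms T T_ne_R by blast
    then have "\<S> j \<subseteq> T" "T \<subseteq> \<S> (Suc j)"
      unfolding is_atom_def minimal_ext_def by blast+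
    then show ?thesis by (rule layer)
  next
    case False
    then obtain T1 T2 where "T1 \<in> \<L>" "T2 \<in> \<L>" "T = ring_prod S T1 T2" "T \<noteq> T1" "T \<noteq> T2"
      unfolding Pi_irreducible_def by blast
    then show ?thesis
      using reducible ring_prod_upper1[of T1 S T2] ring_prod_upper2[of T2 S T1] by blast
  qed
qed

lemma loewy_comparable_if_Pi_irreducibles_in_layers:
  assumes layer_atoms:
    "\<And>T. T \<in> \<L> \<Longrightarrow> T \<noteq> R \<Longrightarrow> Pi_irreducible S R T \<Longrightarrow> \<exists>i. is_atom S (\<S> i) (\<S> (Suc i)) T"
  shows "T \<in> \<L> \<Longrightarrow> loewy_comparable T"
proof (induction T rule: wf_induct_rule[OF wf_psubset_L])
  case (1 T)
  show ?case
  proof (rule in_layer_or_reducible[OF layer_atoms "1.prems"])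
    fix j assume "\<S> j \<subseteq> T" "T \<subseteq> \<S> (Suc j)"
    then show ?thesis by (rule loewy_comparable_if_in_layer)
  next
    fix T1 T2
    assume reducible: "T1 \<in> \<L>" "T2 \<in> \<L>" "T = ring_prod S T1 T2" "T1 \<subset> T" "T2 \<subset> T"
    have comparable: "loewy_comparable T1" "loewy_comparable T2"
      using "1.IH"[of T1] "1.IH"[of T2] "1.prems" reducible by blast+
    show ?thesis
    proof (intro allI disjCI)
      fix m assume "\<not> \<S> m \<subseteq> T"
      then have "T1 \<subseteq> \<S> m" "T2 \<subseteq> \<S> m"
        using comparable reducible(4,5) by blast+
      then show "T \<subseteq> \<S> m" unfolding reducible(3) by (rule ring_prod_least[OF subring_loewy])
    qed
  qed
qed

lemma Pi_irreducible_mem_if_eq_ring_Prod: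
  assumes W: "W \<in> \<L>" and irreducible: "Pi_irreducible S R T" and "T \<noteq> W"
  shows "finite B \<Longrightarrow> B \<subseteq> atoms W \<Longrightarrow> T = ring_Prod S W B \<Longrightarrow> T \<in> B"
proof (induction B rule: finite_induct)
  case empty
  then show ?case using ring_Prod_empty W \<open>T \<noteq> W\<close> by (simp add: mem_L_iff)
next
  case (insert b B)
  have b: "b \<in> atoms W" and B: "B \<subseteq> atoms W" using insert.prems by auto
  have "T = ring_prod S b (ring_Prod S W B)"
    using insert.prems ring_Prod_atoms_insert[OF W B b] by simp
  then have "T = b \<or> T = ring_Prod S W B"
    using irreducible atom_in_L[OF W b] ring_Prod_atoms_in_L[OF W B] unfolding Pi_irreducible_def by blast
  then show ?case using insert.IH B by blast
qed

end

locale distributive_FCP_extension = FCP_extension +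
  assumes distributive: "distributive_ext S R"
begin

lemma Int_ring_prod_distrib:
  "T \<in> \<L> \<Longrightarrow> U \<in> \<L> \<Longrightarrow> V \<in> \<L> \<Longrightarrow> T \<inter> ring_prod S U V = ring_prod S (T \<inter> U) (T \<inter> V)"
  using distributive unfolding distributive_ext_def by blast

lemma Int_ring_Prod_atoms:
  assumes W: "W \<in> \<L>" and T: "T \<in> \<L>" "W \<subseteq> T"
  shows "finite B \<Longrightarrow> B \<subseteq> atoms W \<Longrightarrow> T \<inter> ring_Prod S W B = ring_Prod S W {b \<in> B. b \<subseteq> T}"
proof (induction B rule: finite_induct)
  case empty
  show ?case using T(2) ring_Prod_empty W by (auto simp: mem_L_iff)
next
  case (insert b B)
  have b: "b \<in> atoms W" and B: "B \<subseteq> atoms W" and B_T: "{x \<in> B. x \<subseteq> T} \<subseteq> atoms W"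
    using insert.prems by auto
  have "T \<inter> ring_Prod S W (insert b B) = ring_prod S (T \<inter> b) (T \<inter> ring_Prod S W B)"
    using ring_Prod_atoms_insert[OF W B b]
      Int_ring_prod_distrib[OF T(1) atom_in_L[OF W b] ring_Prod_atoms_in_L[OF W B]] by simp
  also have "\<dots> = ring_prod S (T \<inter> b) (ring_Prod S W {x \<in> B. x \<subseteq> T})"
    using insert.IH[OF B] by simp
  also have "\<dots> = ring_Prod S W {x \<in> insert b B. x \<subseteq> T}"
  proof (cases "b \<subseteq> T")
    case True
    then have "T \<inter> b = b" "{x \<in> insert b B. x \<subseteq> T} = insert b {x \<in> B. x \<subseteq> T}" by auto
    then show ?thesis using ring_Prod_atoms_insert[OF W B_T b] by simp
  next
    case False
    then have "T \<inter> b = W" using atom_Int[OF T b] by blast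
    moreover have "{x \<in> insert b B. x \<subseteq> T} = {x \<in> B. x \<subseteq> T}" using False by auto
    moreover have "ring_prod S W (ring_Prod S W {x \<in> B. x \<subseteq> T}) = ring_Prod S W {x \<in> B. x \<subseteq> T}"
      using ring_Prod_atoms_in_L[OF W B_T] ring_Prod_lower
      by (intro ring_prod_absorb) (simp_all add: mem_L_iff)
    ultimately show ?thesis by simp
  qed
  finally show ?case .
qed

lemma atom_Int_ring_Prod_other_atoms:
  assumes W: "W \<in> \<L>" and B: "finite B" "B \<subseteq> atoms W" and a: "a \<in> atoms W" "a \<notin> B"
  shows "a \<inter> ring_Prod S W B = W"
proof -
  have "W \<subseteq> a" using a(1) unfolding mem_atoms_iff by blast
  then have "a \<inter> ring_Prod S W B = ring_Prod S W {b \<in> B. b \<subseteq> a}"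
    using Int_ring_Prod_atoms[OF W atom_in_L[OF W a(1)] _ B] by blast
  also have "{b \<in> B. b \<subseteq> a} = {}"
    using atom_subset_atom[OF a(1)] a(2) B(2) by blast
  also have "ring_Prod S W {} = W"
    using W by (simp add: ring_Prod_empty mem_L_iff)
  finally show ?thesis .
qed

lemma finite_atoms:
  assumes W: "W \<in> \<L>"
  shows "finite (atoms W)"
proof (rule ccontr)
  assume "infinite (atoms W)"
  then obtain f :: "nat \<Rightarrow> 'a set" where f: "inj f" "range f \<subseteq> atoms W"
    using infinite_countable_subset by blast
  define P where "P k = ring_Prod S W (f ` {..<k})" for k
  have sub: "f ` {..<k} \<subseteq> atoms W" for k using f(2) by blast
  have P_in_L: "P k \<in> \<L>" for k
    unfolding P_def using W sub by (rule ring_Prod_atoms_in_L)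
  have "P k \<subset> P (Suc k)" for k
  proof -
    have fk: "f k \<in> atoms W" using f(2) by blast
    have P_Suc: "P (Suc k) = ring_prod S (f k) (P k)"
      unfolding P_def using ring_Prod_atoms_insert[OF W sub fk] by (simp add: lessThan_Suc)
    have "f k \<notin> f ` {..<k}" by (simp add: inj_image_mem_iff[OF f(1)])
    then have "f k \<inter> P k = W"
      unfolding P_def using atom_Int_ring_Prod_other_atoms[OF W _ sub fk] by blast
    moreover have "W \<subset> f k" using fk unfolding mem_atoms_iff by blast
    ultimately have "\<not> f k \<subseteq> P k" by blast
    then show ?thesis
      unfolding P_Suc using ring_prod_upper1[of "f k" S "P k"] ring_prod_upper2[of "P k" S "f k"]
      by blast
  qed
  then show False using no_strictly_increasing_seq_in_L[of P] P_in_L by blast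
qed

lemma Pi_irreducible_below_socle_is_atom:
  assumes W: "W \<in> \<L>" and T: "T \<in> \<L>" "W \<subset> T" "T \<subseteq> socle S W (carrier S)"
    and irreducible: "Pi_irreducible S R T"
  shows "T \<in> atoms W"
proof -
  have "T = T \<inter> ring_Prod S W (atoms W)"
    using T(3) unfolding socle_eq_ring_Prod by blast
  also have "\<dots> = ring_Prod S W {b \<in> atoms W. b \<subseteq> T}"
    using Int_ring_Prod_atoms[OF W T(1) psubset_imp_subset[OF T(2)] finite_atoms[OF W]] by blast
  finally have T_eq: "T = ring_Prod S W {b \<in> atoms W. b \<subseteq> T}" .
  have "finite {b \<in> atoms W. b \<subseteq> T}"
    by (rule finite_subset[OF _ finite_atoms[OF W]]) blast
  moreover have "T \<noteq> W" using T(2) by blast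
  ultimately have "T \<in> {b \<in> atoms W. b \<subseteq> T}"
    using Pi_irreducible_mem_if_eq_ring_Prod[OF W irreducible _ _ _ T_eq] by blast
  then show ?thesis by blast
qed

lemma Pi_irreducible_is_layer_atom:
  assumes T: "T \<in> \<L>" "T \<noteq> R" and comparable: "loewy_comparable T"
    and irreducible: "Pi_irreducible S R T"
  shows "\<exists>i<loewy_length S R. is_atom S (\<S> i) (\<S> (Suc i)) T"
proof -
  have "R \<subset> T" using T unfolding mem_L_iff by blast
  then obtain i where i: "i < loewy_length S R" "\<S> i \<subset> T" "T \<subseteq> \<S> (Suc i)"
    using layer_if_loewy_comparable[OF T(1) _ comparable] by blast
  have "T \<subseteq> socle S (\<S> i) (carrier S)"
    using i(3) unfolding loewy_Suc_eq_socle[OF i(1)] .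
  then have "T \<in> atoms (\<S> i)"
    using Pi_irreducible_below_socle_is_atom[OF loewy_in_L T(1) i(2)] irreducible by blast
  then show ?thesis using is_atom_layer_iff[OF i(1)] i(1) by blast
qed

lemma Pi_irreducible_iff_layer_atom:
  assumes comparable: "\<And>U. U \<in> \<L> \<Longrightarrow> loewy_comparable U" and T: "T \<in> \<L>" "T \<noteq> R"
  shows "Pi_irreducible S R T \<longleftrightarrow> (\<exists>i<loewy_length S R. is_atom S (\<S> i) (\<S> (Suc i)) T)"
  using Pi_irreducible_is_layer_atom[OF T comparable[OF T(1)]] layer_atom_Pi_irreducible[OF comparable]
  by blast

end

theorem theorem8p6:
  fixes S :: "('a, 'b) ring_scheme" and R :: "'a set"
  assumes "cring S" and "subring R S" and "R \<noteq> carrier S"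
    and "distributive_ext S R" and "FCP S R"
  shows "P_extension S R \<longleftrightarrow>
    (\<forall>T\<in>interval S R (carrier S). T \<noteq> R \<longrightarrow>
       (Pi_irreducible S R T \<longleftrightarrow>
          (\<exists>i<loewy_length S R. is_atom S (loewy S R i) (loewy S R (Suc i)) T)))"
proof -
  interpret distributive_FCP_extension S R
    using assms cring.axioms(1)
    unfolding distributive_FCP_extension_def distributive_FCP_extension_axioms_def
      FCP_extension_def FCP_extension_axioms_def
    by blast
  show ?thesis
  proof
    assume "P_extension S R"
    then have "\<And>T. T \<in> \<L> \<Longrightarrow> loewy_comparable T"
      by (rule loewy_comparable_if_P_extension)
    then show "\<forall>T\<in>\<L>. T \<noteq> R \<longrightarrow>
      (Pi_irreducible S R T \<longleftrightarrow> (\<exists>i<loewy_length S R. is_atom S (\<S> i) (\<S> (Suc i)) T))"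
      using Pi_irreducible_iff_layer_atom by blast
  next
    assume layer_atoms: "\<forall>T\<in>\<L>. T \<noteq> R \<longrightarrow>
      (Pi_irreducible S R T \<longleftrightarrow> (\<exists>i<loewy_length S R. is_atom S (\<S> i) (\<S> (Suc i)) T))"
    have "loewy_comparable T" if "T \<in> \<L>" for T
      by (rule loewy_comparable_if_Pi_irreducibles_in_layers[OF _ that]) (use layer_atoms in blast)
    then show "P_extension S R" by (rule P_extension_if_loewy_comparable[OF assms(3)])
  qed
qed

end
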